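(* Let $\mathbb{Y},\mathbb{T}$ be sets, let $\underline{\mathsf{P}}_{Y,\Theta}$ be a coherent lower prevision on the bounded gambles on $\mathbb{Y}\times\mathbb{T}$ with conjugate upper prevision $\overline{\mathsf{P}}_{Y,\Theta}$, and let $y\mapsto(\underline{\Pi}_y,\overline{\Pi}_y)$ be an inferential model. Suppose the IM is invulnerable, i.e., for every $H\subseteq\mathbb{T}$ and $\beta\in[0,1]$, the gamble $f^{H,\beta}(y,\theta)=\{1(\theta\in H)-\beta\}\,1\{\underline{\Pi}_y(H)>\beta\}$ satisfies $\underline{\mathsf{P}}_{Y,\Theta}(f^{H,\beta})\ge0$. Then the IM is valid, i.e., $$\overline{\mathsf{P}}_{Y,\Theta}\bigl(\{(y,\theta):\underline{\Pi}_y(H)>1-\alpha,\ \theta\notin H\}\bigr)\le\alpha\quad\text{for all }H\subseteq\mathbb{T},\ \alpha\in[0,1].$$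
   Context: A lower prevision $\underline{\mathsf{P}}$ on the linear space of bounded gambles on a set $\Omega$ is coherent if for all integers $m,K\ge0$ and all bounded gambles $f_0,\dots,f_K$, $\sup_{\omega}\bigl[\sum_{k=1}^K\{f_k(\omega)-\underline{\mathsf{P}}(f_k)\}-m\{f_0(\omega)-\underline{\mathsf{P}}(f_0)\}\bigr]\ge0$; its conjugate upper prevision is $\overline{\mathsf{P}}(f)=-\underline{\mathsf{P}}(-f)$, and for a set $B$, $\overline{\mathsf{P}}(B)=\overline{\mathsf{P}}(1_B)$. An inferential model (IM) is a map $y\mapsto(\underline{\Pi}_y,\overline{\Pi}_y)$ assigning to each $y\in\mathbb{Y}$ a coherent lower prevision $\underline{\Pi}_y$ (with conjugate upper prevision $\overline{\Pi}_y$) on bounded gambles on $\mathbb{T}$; $\underline{\Pi}_y(H)=\underline{\Pi}_y(1_H)$ for $H\subseteq\mathbb{T}$. *)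

theory Defs
  imports Main "HOL.Real"
begin

text \<open>A lower prevision is a real functional on gambles; only its values on bounded
gambles matter.\<close>

definition bounded_gamble :: "('w \<Rightarrow> real) \<Rightarrow> bool" where
  "bounded_gamble f \<longleftrightarrow> (\<exists>B. \<forall>w. \<bar>f w\<bar> \<le> B)"

definition coherent_lower_prevision :: "(('w \<Rightarrow> real) \<Rightarrow> real) \<Rightarrow> bool" where
  "coherent_lower_prevision LP \<longleftrightarrow>
     (\<forall>(m::nat) (K::nat) (f :: nat \<Rightarrow> 'w \<Rightarrow> real).
        (\<forall>k\<le>K. bounded_gamble (f k)) \<longrightarrow>
        0 \<le> (SUP w. (\<Sum>k=1..K. f k w - LP (f k)) - real m * (f 0 w - LP (f 0))))"

definition upper_prevision :: "(('w \<Rightarrow> real) \<Rightarrow> real) \<Rightarrow> ('w \<Rightarrow> real) \<Rightarrow> real" where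
  "upper_prevision LP f = - LP (\<lambda>w. - f w)"

definition ind :: "'w set \<Rightarrow> 'w \<Rightarrow> real" where
  "ind B w = (if w \<in> B then 1 else 0)"

definition inferential_model :: "('y \<Rightarrow> ('t \<Rightarrow> real) \<Rightarrow> real) \<Rightarrow> bool" where
  "inferential_model Pi \<longleftrightarrow> (\<forall>y. coherent_lower_prevision (Pi y))"

definition invulnerable ::
  "((('y \<times> 't) \<Rightarrow> real) \<Rightarrow> real) \<Rightarrow> ('y \<Rightarrow> ('t \<Rightarrow> real) \<Rightarrow> real) \<Rightarrow> bool" where
  "invulnerable P Pi \<longleftrightarrow>
     (\<forall>(H::'t set) (\<beta>::real). 0 \<le> \<beta> \<and> \<beta> \<le> 1 \<longrightarrow>
        0 \<le> P (\<lambda>(y, \<theta>). (ind H \<theta> - \<beta>) * ind {y. Pi y (ind H) > \<beta>} y))"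

definition valid_IM ::
  "((('y \<times> 't) \<Rightarrow> real) \<Rightarrow> real) \<Rightarrow> ('y \<Rightarrow> ('t \<Rightarrow> real) \<Rightarrow> real) \<Rightarrow> bool" where
  "valid_IM P Pi \<longleftrightarrow>
     (\<forall>(H::'t set) (\<alpha>::real). 0 \<le> \<alpha> \<and> \<alpha> \<le> 1 \<longrightarrow>
        upper_prevision P (ind {(y, \<theta>). Pi y (ind H) > 1 - \<alpha> \<and> \<theta> \<notin> H}) \<le> \<alpha>)"

end

theory Submission
  imports Defs
begin

text \<open>Take \<open>\<beta> = 1 - \<alpha>\<close> in the invulnerability condition. Pointwise, the gain gamble
\<open>f\<^bsup>H,1-\<alpha>\<^esup>\<close> plus the indicator of the event
\<open>{(y, \<theta>). \<Pi>\<^sub>y(H) > 1 - \<alpha>, \<theta> \<notin> H}\<close> is at most \<open>\<alpha>\<close>. Coherence with one gamble on each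
side turns such a pointwise bound into a bound on the difference of lower previsions,
so the upper prevision of the event is at most \<open>\<alpha>\<close> minus the lower prevision of the gain
gamble, which is non-negative.\<close>

lemma bounded_gamble_ind: "bounded_gamble (ind B)"
  unfolding bounded_gamble_def ind_def by (intro exI[of _ 1]) simp

lemma bounded_gamble_uminus: "bounded_gamble f \<Longrightarrow> bounded_gamble (\<lambda>w. - f w)"
  unfolding bounded_gamble_def by simp

lemma coherent_lower_prevision_diff_le:
  assumes LP: "coherent_lower_prevision LP"
    and f: "bounded_gamble f" and g: "bounded_gamble g"
    and le: "\<And>w. f w - g w \<le> c"
  shows "LP f - LP g \<le> c"
proof -
  define F where "F = (\<lambda>k::nat. if k = 0 then g else f)"
  have "\<forall>k\<le>1. bounded_gamble (F k)"
    using f g by (simp add: F_def)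
  then have "0 \<le> (SUP w. (\<Sum>k=1..1. F k w - LP (F k)) - real 1 * (F 0 w - LP (F 0)))"
    using LP unfolding coherent_lower_prevision_def by blast
  also have "\<dots> = (SUP w. f w - g w - (LP f - LP g))"
    by (simp add: F_def algebra_simps)
  also have "\<dots> \<le> c - (LP f - LP g)"
    using le by (intro cSUP_least) (auto simp: algebra_simps)
  finally show ?thesis by simp
qed

theorem proposition3:
  fixes P :: "(('y \<times> 't) \<Rightarrow> real) \<Rightarrow> real"
    and Pi :: "'y \<Rightarrow> ('t \<Rightarrow> real) \<Rightarrow> real"
  assumes "coherent_lower_prevision P"
    and "inferential_model Pi"
    and "invulnerable P Pi"
  shows "valid_IM P Pi"
  unfolding valid_IM_def
proof (intro allI impI)
  fix H :: "'t set" and \<alpha> :: real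
  assume \<alpha>: "0 \<le> \<alpha> \<and> \<alpha> \<le> 1"
  define A where "A = {(y, \<theta>). Pi y (ind H) > 1 - \<alpha> \<and> \<theta> \<notin> H}"
  define gain where "gain = (\<lambda>(y, \<theta>). (ind H \<theta> - (1 - \<alpha>)) * ind {y. Pi y (ind H) > 1 - \<alpha>} y)"
  have gain_nonneg: "0 \<le> P gain"
    using assms(3) \<alpha> unfolding invulnerable_def gain_def by auto
  have gain_bounded: "bounded_gamble gain"
    using \<alpha> unfolding bounded_gamble_def gain_def ind_def
    by (intro exI[of _ 1]) (auto split: prod.splits)
  have "gain w - (- ind A w) \<le> \<alpha>" for w
    using \<alpha> unfolding gain_def A_def ind_def by (auto split: prod.splits)
  then have "P gain - P (\<lambda>w. - ind A w) \<le> \<alpha>"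
    by (rule coherent_lower_prevision_diff_le[OF assms(1) gain_bounded
          bounded_gamble_uminus[OF bounded_gamble_ind]])
  then show "upper_prevision P (ind {(y, \<theta>). Pi y (ind H) > 1 - \<alpha> \<and> \<theta> \<notin> H}) \<le> \<alpha>"
    using gain_nonneg unfolding upper_prevision_def A_def by linarith
qed

end
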